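(* For every non-negative integer $n$, the map $(T,\lambda)\mapsto\sigma(T,\lambda)$ is a bijection from the set of all increasing trees with $n$ branchings onto the set of all set compositions of $[n]=\{1,\ldots,n\}$.
   Context: A (planar rooted) tree is a finite planar rooted tree in which every vertex has exactly one outgoing edge (towards the root; the vertex nearest the root has an outgoing root edge) and at least two incoming edges, ordered from left to right; incoming edges either come from another vertex or are leaves. The trivial tree $\varepsilon$ has no vertex (a single edge). For $m\ge 1$ and trees $T_0,\ldots,T_m$, the wedge $\bigvee(T_0,\ldots,T_m)$ is obtained by joining the roots of $T_0,\ldots,T_m$ (in this left-to-right order) to a new vertex, which receives a new root edge; every non-trivial tree is uniquely such a wedge. A vertex with $m+1$ incoming edges carries $m$ branchings, namely the $m$ pairs of consecutive incoming edges at that vertex; a branching is assigned the vertex carrying it. Let $B(T)$ be the set of branchings of $T$ and $b(T)=|B(T)|$. The left-to-right order $\preceq$ on $B(T)$ is defined recursively: if $T=\bigvee(T_0,\ldots,T_m)$ and $b_1,\ldots,b_m$ are the branchings at the root vertex, from left to right (the root branchings, $b_i$ lying between $T_{i-1}$ and $T_i$), then $b_i\prec b\prec b_{i+1}$ for all $b\in B(T_i)$ (with $b_0$, $b_{m+1}$ omitted), and $B(T_i)$ carries its own order. The natural labelling is the unique order-preserving bijection $([n],\le)\to(B(T),\preceq)$, $n=b(T)$. A standard level function on $T$ is a surjective map $\lambda$ from the set of vertices of $T$ onto $[k]$ for some $k\ge 0$ that is strictly increasing along every path from a leaf to the root; an increasing tree is a pair $(T,\lambda)$ with $\lambda$ a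 standard level function, and the level of a branching is the level of its vertex. A set composition of a finite set $S$ of length $k$ is a tuple $(P_1,\ldots,P_k)$ of pairwise disjoint non-empty subsets with union $S$. For an increasing tree $(T,\lambda)$ with $n$ branchings and $k$ levels, $\sigma(T,\lambda)=(P_1,\ldots,P_k)$ where $P_i$ is the set of natural labels of the branchings of $T$ at level $i$. *)

theory Defs
  imports Main
begin

text \<open>Planar rooted trees: Leaf is the trivial tree (a single edge);
  Node [T0,...,Tm] is the wedge. Well-formedness: every vertex has at least two incoming edges.\<close>
datatype ptree = Leaf | Node "ptree list"

fun wf_ptree :: "ptree \<Rightarrow> bool" where
  "wf_ptree Leaf = True"
| "wf_ptree (Node ts) = (2 \<le> length ts \<and> (\<forall>t\<in>set ts. wf_ptree t))"

text \<open>Vertices are addressed by paths from the root: [] is the root vertex,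
  i # p is vertex p of the i-th subtree (counted from 0, left to right).\<close>
function vertices :: "ptree \<Rightarrow> nat list set" where
  "vertices Leaf = {}"
| "vertices (Node ts) = insert [] (\<Union>(i, t)\<in>set (zip [0..<length ts] ts). (Cons i) ` vertices t)"
  by pat_completeness auto
termination
  by (relation "measure size") (auto dest!: set_zip_rightD simp: less_Suc_eq_le intro: size_list_estimation')

text \<open>Branchings: a pair (p, j) with 1 \<le> j \<le> m is the j-th branching at vertex p
  (between incoming edges j-1 and j). The list is in the left-to-right order:
  B(T0), b1, B(T1), b2, ..., bm, B(Tm).\<close>
function branchings :: "ptree \<Rightarrow> (nat list \<times> nat) list" where
  "branchings Leaf = []"
| "branchings (Node ts) =
     concat (map (\<lambda>(i, t). map (\<lambda>(p, j). (i # p, j)) (branchings t)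
                       @ (if i + 1 < length ts then [([], i + 1)] else []))
              (zip [0..<length ts] ts))"
  by pat_completeness auto
termination
  by (relation "measure size") (auto dest!: set_zip_rightD simp: less_Suc_eq_le intro: size_list_estimation')

definition num_branchings :: "ptree \<Rightarrow> nat" where
  "num_branchings T = length (branchings T)"

definition std_level :: "ptree \<Rightarrow> (nat list \<Rightarrow> nat) \<Rightarrow> bool" where
  "std_level T lam \<longleftrightarrow>
     (\<forall>p. p \<notin> vertices T \<longrightarrow> lam p = 0) \<and>
     (\<exists>k. lam ` vertices T = {1..k}) \<and>
     (\<forall>p i. p \<in> vertices T \<longrightarrow> p @ [i] \<in> vertices T \<longrightarrow> lam (p @ [i]) < lam p)"

definition increasing_trees :: "nat \<Rightarrow> (ptree \<times> (nat list \<Rightarrow> nat)) set" where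
  "increasing_trees n = {(T, lam). wf_ptree T \<and> std_level T lam \<and> num_branchings T = n}"

definition num_levels :: "ptree \<Rightarrow> (nat list \<Rightarrow> nat) \<Rightarrow> nat" where
  "num_levels T lam = card (lam ` vertices T)"

text \<open>sigma(T, lam) = (P1,...,Pk), Pi = natural labels (1-based positions in the
  left-to-right order) of branchings at level i.\<close>
definition sigma :: "ptree \<times> (nat list \<Rightarrow> nat) \<Rightarrow> nat set list" where
  "sigma Tl = (case Tl of (T, lam) \<Rightarrow>
     map (\<lambda>i. {Suc q | q. q < length (branchings T) \<and> lam (fst (branchings T ! q)) = i})
         [1..<Suc (num_levels T lam)])"

definition set_composition :: "'a set \<Rightarrow> 'a set list \<Rightarrow> bool" where
  "set_composition S Ps \<longleftrightarrow>
     (\<forall>P\<in>set Ps. P \<noteq> {}) \<and>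
     (\<forall>i j. i < length Ps \<longrightarrow> j < length Ps \<longrightarrow> i \<noteq> j \<longrightarrow> Ps ! i \<inter> Ps ! j = {}) \<and>
     \<Union>(set Ps) = S"

end

theory Submission
  imports Defs
begin

text \<open>Reading the levels of the branchings of an increasing tree from left to right gives a word
  of length \<open>n\<close> whose set of letters is \<open>{1..k}\<close> (a packed word), and \<open>sigma\<close> is the set
  composition whose \<open>i\<close>-th block consists of the positions of the letter \<open>i\<close>; this
  identifies packed words of length \<open>n\<close> with set compositions of \<open>{1..n}\<close>. The tree is
  recovered from its word: the root carries the unique largest letter, and its occurrences, one
  for each root branching, cut the word into the words of the subtrees.\<close>

section \<open>Splitting a list at a separator\<close>

fun join_sep :: "'a \<Rightarrow> 'a list list \<Rightarrow> 'a list" where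
  "join_sep c [] = []"
| "join_sep c [w] = w"
| "join_sep c (w # v # ws) = w @ c # join_sep c (v # ws)"

fun split_sep :: "'a \<Rightarrow> 'a list \<Rightarrow> 'a list list" where
  "split_sep c [] = [[]]"
| "split_sep c (x # xs) =
     (if x = c then [] # split_sep c xs else (x # hd (split_sep c xs)) # tl (split_sep c xs))"

lemma join_sep_Cons: "join_sep c (w # ws) = w @ (if ws = [] then [] else c # join_sep c ws)"
  by (cases ws) auto

lemma set_join_sep:
  "ws \<noteq> [] \<Longrightarrow> set (join_sep c ws) = (\<Union>w\<in>set ws. set w) \<union> (if 2 \<le> length ws then {c} else {})"
  by (induction c ws rule: join_sep.induct) auto

lemma concat_map_append_sep:
  "a < b \<Longrightarrow>
   concat (map (\<lambda>i. f i @ (if i + 1 < b then [c] else [])) [a..<b]) = join_sep c (map f [a..<b])"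
proof (induction "b - a" arbitrary: a)
  case 0
  then show ?case by simp
next
  case (Suc k)
  have upt: "[a..<b] = a # [Suc a..<b]"
    using Suc.prems upt_conv_Cons by blast
  show ?case
  proof (cases "Suc a < b")
    case True
    then show ?thesis using Suc.hyps upt by (simp add: join_sep_Cons)
  next
    case False
    then show ?thesis using Suc.prems upt by simp
  qed
qed

lemma split_sep_not_Nil [simp]: "split_sep c xs \<noteq> []"
  by (induction xs) auto

lemma join_sep_split_sep: "join_sep c (split_sep c xs) = xs"
proof (induction xs)
  case Nil
  then show ?case by simp
next
  case (Cons x xs)
  obtain v vs where "split_sep c xs = v # vs"
    using split_sep_not_Nil by (metis list.exhaust)
  then show ?case using Cons by (simp add: join_sep_Cons)
qed

lemma split_sep_append_sep: "c \<notin> set w \<Longrightarrow> split_sep c (w @ c # xs) = w # split_sep c xs"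
  by (induction w) auto

lemma split_sep_join_sep:
  "ws \<noteq> [] \<Longrightarrow> \<forall>w\<in>set ws. c \<notin> set w \<Longrightarrow> split_sep c (join_sep c ws) = ws"
proof (induction c ws rule: join_sep.induct)
  case (2 c w)
  then show ?case by (induction w) auto
qed (auto simp: split_sep_append_sep)

lemma in_set_split_sep_Cons:
  assumes "v \<in> set (split_sep c (x # xs))"
  shows "v \<in> set (split_sep c xs) \<or> (x = c \<and> v = []) \<or> (x \<noteq> c \<and> (\<exists>u\<in>set (split_sep c xs). v = x # u))"
proof -
  obtain u us where "split_sep c xs = u # us"
    using split_sep_not_Nil by (metis list.exhaust)
  then show ?thesis using assms by (auto split: if_splits)
qed

lemma sep_notin_split_sep: "v \<in> set (split_sep c xs) \<Longrightarrow> c \<notin> set v"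
proof (induction xs arbitrary: v)
  case (Cons x xs)
  from in_set_split_sep_Cons[OF Cons.prems] show ?case using Cons.IH by auto
qed simp

lemma set_split_sep_subset: "v \<in> set (split_sep c xs) \<Longrightarrow> set v \<subseteq> set xs"
proof (induction xs arbitrary: v)
  case (Cons x xs)
  from in_set_split_sep_Cons[OF Cons.prems] show ?case using Cons.IH by fastforce
qed simp

lemma length_split_sep_le: "v \<in> set (split_sep c xs) \<Longrightarrow> length v \<le> length xs"
proof (induction xs arbitrary: v)
  case (Cons x xs)
  from in_set_split_sep_Cons[OF Cons.prems] show ?case using Cons.IH by fastforce
qed simp

lemma length_split_sep_less: "c \<in> set xs \<Longrightarrow> v \<in> set (split_sep c xs) \<Longrightarrow> length v < length xs"
proof (induction xs arbitrary: v)
  case (Cons x xs)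
  from in_set_split_sep_Cons[OF Cons.prems(2)] show ?case
    using Cons.IH Cons.prems(1) length_split_sep_le by fastforce
qed simp

lemma length_split_sep_ge2: "c \<in> set xs \<Longrightarrow> 2 \<le> length (split_sep c xs)"
proof (induction xs)
  case (Cons x xs)
  obtain u us where "split_sep c xs = u # us"
    using split_sep_not_Nil by (metis list.exhaust)
  then show ?case using Cons by (auto split: if_splits)
qed simp

lemma length_split_sep_Max_less:
  "w \<noteq> [] \<Longrightarrow> v \<in> set (split_sep (Max (set w)) w) \<Longrightarrow> length v < length w"
  by (rule length_split_sep_less) auto

lemma Max_split_sep_Max_less:
  fixes w :: "'a::linorder list"
  assumes "v \<in> set (split_sep (Max (set w)) w)" "v \<noteq> []"
  shows "Max (set v) < Max (set w)"
proof -
  have in_v: "Max (set v) \<in> set v"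
    using assms(2) by simp
  then have "Max (set v) \<in> set w"
    using set_split_sep_subset[OF assms(1)] by blast
  moreover have "Max (set v) \<noteq> Max (set w)"
    using in_v sep_notin_split_sep[OF assms(1)] by auto
  ultimately show ?thesis
    by (simp add: order.not_eq_order_implies_strict)
qed

section \<open>Packed words and set compositions\<close>

definition packed_words :: "nat \<Rightarrow> nat list set" where
  "packed_words n = {w. length w = n \<and> (\<exists>k. set w = {1..k})}"

definition blocks_of_word :: "nat list \<Rightarrow> nat set list" where
  "blocks_of_word w = map (\<lambda>i. {Suc q | q. q < length w \<and> w ! q = i}) [1..<Suc (card (set w))]"

text \<open>Positions and letters are 1-based while list indices are 0-based: position \<open>q + 1\<close>
  carries the letter \<open>i + 1\<close> iff it lies in block \<open>Ps ! i\<close>.\<close>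
definition word_of_blocks :: "nat \<Rightarrow> nat set list \<Rightarrow> nat list" where
  "word_of_blocks n Ps = map (\<lambda>q. Suc (THE i. i < length Ps \<and> Suc q \<in> Ps ! i)) [0..<n]"

lemma length_word_of_blocks [simp]: "length (word_of_blocks n Ps) = n"
  by (simp add: word_of_blocks_def)

lemma length_blocks_of_word: "set w = {1..k} \<Longrightarrow> length (blocks_of_word w) = k"
  by (simp add: blocks_of_word_def)

lemma nth_blocks_of_word:
  assumes "set w = {1..k}" "i < k"
  shows "blocks_of_word w ! i = {Suc q | q. q < length w \<and> w ! q = Suc i}"
proof -
  have "card (set w) = k"
    using assms(1) by simp
  moreover have "[1..<Suc k] ! i = Suc i"
    using assms(2) by (subst nth_upt) auto
  ultimately show ?thesis
    using assms(2) by (simp add: blocks_of_word_def del: upt_Suc)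
qed

lemma set_composition_blocks_of_word:
  assumes "w \<in> packed_words n"
  shows "set_composition {1..n} (blocks_of_word w)"
proof -
  obtain k where k: "set w = {1..k}" and n: "length w = n"
    using assms by (auto simp: packed_words_def)
  note blocks = length_blocks_of_word[OF k] nth_blocks_of_word[OF k]
  have "blocks_of_word w ! i \<noteq> {}" if "i < k" for i
  proof -
    have "Suc i \<in> set w"
      using k that by auto
    then obtain q where "q < length w" "w ! q = Suc i"
      by (auto simp: in_set_conv_nth)
    then show ?thesis
      using that blocks by auto
  qed
  moreover have "blocks_of_word w ! i \<inter> blocks_of_word w ! j = {}" if "i < k" "j < k" "i \<noteq> j" for i j
    using that blocks by auto
  moreover have "\<Union>(set (blocks_of_word w)) = {1..n}"
  proof (intro set_eqI iffI)
    fix x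
    assume "x \<in> \<Union>(set (blocks_of_word w))"
    then obtain i where "i < k" "x \<in> blocks_of_word w ! i"
      by (auto simp: in_set_conv_nth blocks(1))
    then show "x \<in> {1..n}"
      using n blocks(2) by auto
  next
    fix x
    assume "x \<in> {1..n}"
    then obtain q where q: "x = Suc q" "q < length w"
      using n by (cases x) auto
    then have "w ! q \<in> {1..k}"
      using k nth_mem by blast
    then obtain i where i: "i < k" "w ! q = Suc i"
      by (cases "w ! q") auto
    then have "x \<in> blocks_of_word w ! i"
      using q blocks(2) by auto
    then show "x \<in> \<Union>(set (blocks_of_word w))"
      using i blocks(1) by (metis UnionI nth_mem)
  qed
  ultimately show ?thesis
    unfolding set_composition_def by (auto simp: in_set_conv_nth blocks(1))
qed

lemma set_composition_ex1_block:
  assumes "set_composition S Ps" "x \<in> S"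
  shows "\<exists>!i. i < length Ps \<and> x \<in> Ps ! i"
proof -
  obtain i where i: "i < length Ps" "x \<in> Ps ! i"
    using assms unfolding set_composition_def by (auto simp: in_set_conv_nth)
  moreover have "j = i" if "j < length Ps" "x \<in> Ps ! j" for j
    using assms(1) i that unfolding set_composition_def by blast
  ultimately show ?thesis
    by blast
qed

lemma set_composition_block_subset: "set_composition S Ps \<Longrightarrow> i < length Ps \<Longrightarrow> Ps ! i \<subseteq> S"
  unfolding set_composition_def using nth_mem by blast

lemma set_composition_block_nonempty: "set_composition S Ps \<Longrightarrow> i < length Ps \<Longrightarrow> Ps ! i \<noteq> {}"
  unfolding set_composition_def using nth_mem by blast

lemma nth_word_of_blocks_eq_Suc_iff:
  assumes "set_composition {1..n} Ps" "q < n" "i < length Ps"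
  shows "word_of_blocks n Ps ! q = Suc i \<longleftrightarrow> Suc q \<in> Ps ! i"
proof -
  have "\<exists>!j. j < length Ps \<and> Suc q \<in> Ps ! j"
    using assms(2) by (intro set_composition_ex1_block[OF assms(1)]) simp
  then obtain j where j: "j < length Ps \<and> Suc q \<in> Ps ! j"
    and unique: "\<forall>j'. j' < length Ps \<and> Suc q \<in> Ps ! j' \<longrightarrow> j' = j"
    by blast
  have "(THE j. j < length Ps \<and> Suc q \<in> Ps ! j) = j"
    using j unique by (intro the_equality) blast+
  then have "word_of_blocks n Ps ! q = Suc j"
    using assms(2) by (simp add: word_of_blocks_def)
  moreover have "Suc q \<in> Ps ! i \<longleftrightarrow> j = i"
    using j unique assms(3) by blast
  ultimately show ?thesis
    by simp
qed

lemma set_word_of_blocks: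
  assumes sc: "set_composition {1..n} Ps"
  shows "set (word_of_blocks n Ps) = {1..length Ps}"
proof (intro set_eqI iffI)
  fix x
  assume "x \<in> set (word_of_blocks n Ps)"
  then obtain q where q: "q < n" "x = word_of_blocks n Ps ! q"
    unfolding in_set_conv_nth by auto
  obtain j where j: "j < length Ps" "Suc q \<in> Ps ! j"
    using set_composition_ex1_block[OF sc, of "Suc q"] q(1) by auto
  then have "x = Suc j"
    using nth_word_of_blocks_eq_Suc_iff[OF sc q(1) j(1)] q(2) by simp
  then show "x \<in> {1..length Ps}"
    using j(1) by simp
next
  fix x
  assume "x \<in> {1..length Ps}"
  then obtain i where i: "x = Suc i" "i < length Ps"
    by (cases x) auto
  then obtain y where y: "y \<in> Ps ! i"
    using set_composition_block_nonempty[OF sc] by blast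
  then obtain q where q: "y = Suc q" "q < n"
    using set_composition_block_subset[OF sc i(2)] by (cases y) auto
  then have "word_of_blocks n Ps ! q = x"
    using nth_word_of_blocks_eq_Suc_iff[OF sc q(2) i(2)] i y by simp
  then show "x \<in> set (word_of_blocks n Ps)"
    using q by (auto simp: in_set_conv_nth)
qed

lemma word_of_blocks_in_packed_words:
  "set_composition {1..n} Ps \<Longrightarrow> word_of_blocks n Ps \<in> packed_words n"
  by (auto simp: packed_words_def set_word_of_blocks)

lemma blocks_of_word_word_of_blocks:
  assumes sc: "set_composition {1..n} Ps"
  shows "blocks_of_word (word_of_blocks n Ps) = Ps"
proof (rule nth_equalityI)
  note blocks = length_blocks_of_word[OF set_word_of_blocks[OF sc]]
    nth_blocks_of_word[OF set_word_of_blocks[OF sc]]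
  show "length (blocks_of_word (word_of_blocks n Ps)) = length Ps"
    by (fact blocks(1))
  fix i
  assume "i < length (blocks_of_word (word_of_blocks n Ps))"
  then have i: "i < length Ps"
    by (simp add: blocks(1))
  have "x \<in> blocks_of_word (word_of_blocks n Ps) ! i \<longleftrightarrow> x \<in> Ps ! i" for x
    using set_composition_block_subset[OF sc i] nth_word_of_blocks_eq_Suc_iff[OF sc _ i]
    by (cases x) (auto simp: blocks(2)[OF i])
  then show "blocks_of_word (word_of_blocks n Ps) ! i = Ps ! i"
    by blast
qed

lemma word_of_blocks_blocks_of_word:
  assumes w: "w \<in> packed_words n"
  shows "word_of_blocks n (blocks_of_word w) = w"
proof (rule nth_equalityI)
  obtain k where k: "set w = {1..k}" and n: "length w = n"
    using w by (auto simp: packed_words_def)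
  show "length (word_of_blocks n (blocks_of_word w)) = length w"
    using n by simp
  fix q
  assume "q < length (word_of_blocks n (blocks_of_word w))"
  then have q: "q < n"
    by simp
  then have "w ! q \<in> {1..k}"
    using k n nth_mem by blast
  then obtain i where i: "i < k" "w ! q = Suc i"
    by (cases "w ! q") auto
  then have "Suc q \<in> blocks_of_word w ! i"
    using q n by (auto simp: nth_blocks_of_word[OF k])
  then show "word_of_blocks n (blocks_of_word w) ! q = w ! q"
    using nth_word_of_blocks_eq_Suc_iff[OF set_composition_blocks_of_word[OF w] q] i
    by (simp add: length_blocks_of_word[OF k])
qed

lemma bij_betw_blocks_of_word:
  "bij_betw blocks_of_word (packed_words n) {Ps. set_composition {1..n} Ps}"
proof (rule bij_betw_byWitness[where f' = "word_of_blocks n"])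
  show "\<forall>w\<in>packed_words n. word_of_blocks n (blocks_of_word w) = w"
    using word_of_blocks_blocks_of_word by blast
  show "\<forall>Ps\<in>{Ps. set_composition {1..n} Ps}. blocks_of_word (word_of_blocks n Ps) = Ps"
    using blocks_of_word_word_of_blocks by blast
  show "blocks_of_word ` packed_words n \<subseteq> {Ps. set_composition {1..n} Ps}"
    using set_composition_blocks_of_word by blast
  show "word_of_blocks n ` {Ps. set_composition {1..n} Ps} \<subseteq> packed_words n"
    using word_of_blocks_in_packed_words by blast
qed

section \<open>The level word of an increasing tree\<close>

lemma zip_upt_length: "zip [0..<length xs] xs = map (\<lambda>i. (i, xs ! i)) [0..<length xs]"
  by (rule nth_equalityI) auto

lemma vertices_Node: "vertices (Node ts) = insert [] (\<Union>i<length ts. Cons i ` vertices (ts ! i))"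
  by (simp add: zip_upt_length image_image atLeast0LessThan)

declare vertices.simps(2) [simp del]

lemma Nil_in_vertices_iff [simp]: "[] \<in> vertices T \<longleftrightarrow> T \<noteq> Leaf"
  by (cases T) (auto simp: vertices_Node)

lemma Cons_in_vertices_Node [simp]:
  "i # q \<in> vertices (Node ts) \<longleftrightarrow> i < length ts \<and> q \<in> vertices (ts ! i)"
  by (auto simp: vertices_Node)

lemma branchings_Node:
  "branchings (Node ts) =
     concat (map (\<lambda>i. map (\<lambda>(p, j). (i # p, j)) (branchings (ts ! i))
                     @ (if i + 1 < length ts then [([], i + 1)] else [])) [0..<length ts])"
  by (simp add: zip_upt_length comp_def)

declare branchings.simps(2) [simp del]

definition level_word :: "ptree \<Rightarrow> (nat list \<Rightarrow> nat) \<Rightarrow> nat list" where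
  "level_word T lam = map (\<lambda>b. lam (fst b)) (branchings T)"

definition increasing_to_root :: "ptree \<Rightarrow> (nat list \<Rightarrow> nat) \<Rightarrow> bool" where
  "increasing_to_root T lam \<longleftrightarrow>
     (\<forall>p i. p \<in> vertices T \<longrightarrow> p @ [i] \<in> vertices T \<longrightarrow> lam (p @ [i]) < lam p)"

definition zero_off_vertices :: "ptree \<Rightarrow> (nat list \<Rightarrow> nat) \<Rightarrow> bool" where
  "zero_off_vertices T lam \<longleftrightarrow> (\<forall>p. p \<notin> vertices T \<longrightarrow> lam p = 0)"

lemma std_level_iff:
  "std_level T lam \<longleftrightarrow>
     zero_off_vertices T lam \<and> (\<exists>k. lam ` vertices T = {1..k}) \<and> increasing_to_root T lam"
  by (simp add: std_level_def zero_off_vertices_def increasing_to_root_def)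

lemma length_level_word: "length (level_word T lam) = num_branchings T"
  by (simp add: level_word_def num_branchings_def)

lemma level_word_Leaf [simp]: "level_word Leaf lam = []"
  by (simp add: level_word_def)

lemma level_word_Node:
  assumes "ts \<noteq> []"
  shows "level_word (Node ts) lam =
           join_sep (lam []) (map (\<lambda>i. level_word (ts ! i) (lam \<circ> Cons i)) [0..<length ts])"
proof -
  have "level_word (Node ts) lam =
          concat (map (\<lambda>i. level_word (ts ! i) (lam \<circ> Cons i)
                           @ (if i + 1 < length ts then [lam []] else [])) [0..<length ts])"
    by (simp add: level_word_def branchings_Node map_concat case_prod_beta comp_def
        if_distrib[where f = "map _"] cong: map_cong if_cong)
  also have "\<dots> = join_sep (lam []) (map (\<lambda>i. level_word (ts ! i) (lam \<circ> Cons i)) [0..<length ts])"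
    using assms by (intro concat_map_append_sep) simp
  finally show ?thesis .
qed

lemma increasing_to_root_Node:
  "increasing_to_root (Node ts) lam \<longleftrightarrow>
     (\<forall>i<length ts. increasing_to_root (ts ! i) (lam \<circ> Cons i) \<and> (ts ! i \<noteq> Leaf \<longrightarrow> lam [i] < lam []))"
  (is "?whole \<longleftrightarrow> ?parts")
proof
  assume ?whole
  then have step: "lam (p @ [j]) < lam p" if "p \<in> vertices (Node ts)" "p @ [j] \<in> vertices (Node ts)" for p j
    using that by (auto simp: increasing_to_root_def)
  show ?parts
    unfolding increasing_to_root_def using step[of "_ # _"] step[of "[]"] by auto
next
  assume ?parts
  show ?whole
    unfolding increasing_to_root_def
  proof (intro allI impI)
    fix p j
    assume "p \<in> vertices (Node ts)" "p @ [j] \<in> vertices (Node ts)"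
    with \<open>?parts\<close> show "lam (p @ [j]) < lam p"
      by (cases p) (auto simp: increasing_to_root_def)
  qed
qed

lemma zero_off_vertices_Node:
  "zero_off_vertices (Node ts) lam \<longleftrightarrow>
     (\<forall>i<length ts. zero_off_vertices (ts ! i) (lam \<circ> Cons i)) \<and> (\<forall>i q. length ts \<le> i \<longrightarrow> lam (i # q) = 0)"
  unfolding zero_off_vertices_def
proof (intro iffI conjI allI impI)
  fix p
  assume "(\<forall>i<length ts. \<forall>q. q \<notin> vertices (ts ! i) \<longrightarrow> (lam \<circ> Cons i) q = 0) \<and>
          (\<forall>i q. length ts \<le> i \<longrightarrow> lam (i # q) = 0)"
    and "p \<notin> vertices (Node ts)"
  then show "lam p = 0"
    by (cases p) (auto, meson not_le)
qed auto

lemma level_less_root: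
  "increasing_to_root T lam \<Longrightarrow> v \<in> vertices T \<Longrightarrow> v \<noteq> [] \<Longrightarrow> lam v < lam []"
proof (induction T arbitrary: lam v)
  case (Node ts)
  then obtain i q where v: "v = i # q" and i: "i < length ts" and q: "q \<in> vertices (ts ! i)"
    by (cases v) auto
  then have "ts ! i \<noteq> Leaf"
    by auto
  then have root: "lam [i] < lam []" and child: "increasing_to_root (ts ! i) (lam \<circ> Cons i)"
    using Node.prems(1) i by (simp_all add: increasing_to_root_Node)
  show ?case
  proof (cases "q = []")
    case False
    with Node.IH[OF nth_mem[OF i] child q] show ?thesis
      using root v by simp
  qed (use root v in simp)
qed simp

lemma set_level_word: "wf_ptree T \<Longrightarrow> set (level_word T lam) = lam ` vertices T"
proof (induction T arbitrary: lam)
  case (Node ts)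
  then have "2 \<le> length ts" "ts \<noteq> []"
    by auto
  then have "set (level_word (Node ts) lam) =
               insert (lam []) (\<Union>i<length ts. set (level_word (ts ! i) (lam \<circ> Cons i)))"
    by (auto simp: level_word_Node set_join_sep atLeast0LessThan)
  also have "\<dots> = insert (lam []) (\<Union>i<length ts. (lam \<circ> Cons i) ` vertices (ts ! i))"
    using Node by simp
  also have "\<dots> = lam ` vertices (Node ts)"
    by (simp add: vertices_Node image_UN image_comp)
  finally show ?case .
qed simp

lemma Max_level_word:
  assumes "wf_ptree T" "increasing_to_root T lam" "T \<noteq> Leaf"
  shows "Max (set (level_word T lam)) = lam []"
proof (rule Max_eqI)
  show "finite (set (level_word T lam))"
    by simp
  show "lam [] \<in> set (level_word T lam)"
    using assms by (simp add: set_level_word)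
  show "x \<le> lam []" if x: "x \<in> set (level_word T lam)" for x
  proof -
    obtain v where "v \<in> vertices T" "x = lam v"
      using x by (auto simp: set_level_word[OF assms(1)])
    then show ?thesis
      using level_less_root[OF assms(2)] by (cases "v = []") (auto intro: less_imp_le)
  qed
qed

lemma split_level_word_Node:
  assumes "wf_ptree (Node ts)" "increasing_to_root (Node ts) lam"
  shows "split_sep (lam []) (level_word (Node ts) lam) =
           map (\<lambda>i. level_word (ts ! i) (lam \<circ> Cons i)) [0..<length ts]"
proof -
  have "lam [] \<notin> (\<lambda>q. lam (i # q)) ` vertices (ts ! i)" if i: "i < length ts" for i
  proof
    assume "lam [] \<in> (\<lambda>q. lam (i # q)) ` vertices (ts ! i)"
    then obtain q where q: "q \<in> vertices (ts ! i)" and eq: "lam [] = lam (i # q)"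
      by auto
    have "lam (i # q) < lam []"
      using q i level_less_root[OF assms(2), of "i # q"] by simp
    with eq show False
      by simp
  qed
  then have "lam [] \<notin> set (level_word (ts ! i) (lam \<circ> Cons i))" if "i < length ts" for i
    using assms that by (simp add: set_level_word comp_def)
  moreover have "ts \<noteq> []"
    using assms(1) by auto
  ultimately show ?thesis
    by (simp add: level_word_Node split_sep_join_sep)
qed

section \<open>Rebuilding the tree from its level word\<close>

function tree_of_word :: "nat list \<Rightarrow> ptree \<times> (nat list \<Rightarrow> nat)" where
  "tree_of_word w =
     (if w = [] then (Leaf, \<lambda>_. 0)
      else (Node (map (\<lambda>v. fst (tree_of_word v)) (split_sep (Max (set w)) w)),
            \<lambda>p. case p of
                  [] \<Rightarrow> Max (set w)
                | i # q \<Rightarrow> if i < length (split_sep (Max (set w)) w)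
                          then snd (tree_of_word (split_sep (Max (set w)) w ! i)) q else 0))"
  by pat_completeness auto
termination
  by (relation "measure length") (auto intro: length_split_sep_Max_less)

declare tree_of_word.simps [simp del]

lemma tree_of_word_Nil [simp]: "tree_of_word [] = (Leaf, \<lambda>_. 0)"
  by (simp add: tree_of_word.simps)

context
  fixes w :: "nat list"
  assumes w: "w \<noteq> []"
begin

lemma fst_tree_of_word:
  "fst (tree_of_word w) = Node (map (\<lambda>v. fst (tree_of_word v)) (split_sep (Max (set w)) w))"
  using w by (simp add: tree_of_word.simps)

lemma snd_tree_of_word_Nil: "snd (tree_of_word w) [] = Max (set w)"
  using w by (simp add: tree_of_word.simps)

lemma snd_tree_of_word_Cons:
  "snd (tree_of_word w) (i # q) =
     (if i < length (split_sep (Max (set w)) w)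
      then snd (tree_of_word (split_sep (Max (set w)) w ! i)) q else 0)"
  using w by (simp add: tree_of_word.simps)

lemma snd_tree_of_word_comp_Cons:
  "i < length (split_sep (Max (set w)) w) \<Longrightarrow>
     snd (tree_of_word w) \<circ> Cons i = snd (tree_of_word (split_sep (Max (set w)) w ! i))"
  by (auto simp: snd_tree_of_word_Cons)

end

lemma wf_tree_of_word: "wf_ptree (fst (tree_of_word w))"
proof (induction w rule: tree_of_word.induct)
  case (1 w)
  then show ?case
    by (cases "w = []") (auto simp: fst_tree_of_word length_split_sep_ge2)
qed

lemma zero_off_vertices_tree_of_word: "zero_off_vertices (fst (tree_of_word w)) (snd (tree_of_word w))"
proof (induction w rule: tree_of_word.induct)
  case (1 w)
  show ?case
  proof (cases "w = []")
    case False
    with 1 show ?thesis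
      by (simp add: fst_tree_of_word zero_off_vertices_Node snd_tree_of_word_comp_Cons
          snd_tree_of_word_Cons)
  qed (simp add: zero_off_vertices_def)
qed

lemma increasing_to_root_tree_of_word: "increasing_to_root (fst (tree_of_word w)) (snd (tree_of_word w))"
proof (induction w rule: tree_of_word.induct)
  case (1 w)
  show ?case
  proof (cases "w = []")
    case True
    then show ?thesis
      by (simp add: increasing_to_root_def)
  next
    case False
    let ?ws = "split_sep (Max (set w)) w"
    have "snd (tree_of_word w) [i] < snd (tree_of_word w) []"
      if "i < length ?ws" "fst (tree_of_word (?ws ! i)) \<noteq> Leaf" for i
    proof -
      have "?ws ! i \<noteq> []"
        using that(2) by auto
      then show ?thesis
        using that(1) False Max_split_sep_Max_less[OF nth_mem[OF that(1)]]
        by (simp add: snd_tree_of_word_Cons snd_tree_of_word_Nil)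
    qed
    with 1 False show ?thesis
      by (simp add: fst_tree_of_word increasing_to_root_Node snd_tree_of_word_comp_Cons)
  qed
qed

lemma level_word_tree_of_word: "level_word (fst (tree_of_word w)) (snd (tree_of_word w)) = w"
proof (induction w rule: tree_of_word.induct)
  case (1 w)
  show ?case
  proof (cases "w = []")
    case False
    let ?ws = "split_sep (Max (set w)) w"
    have "level_word (fst (tree_of_word (?ws ! i))) (snd (tree_of_word w) \<circ> Cons i) = ?ws ! i"
      if "i < length ?ws" for i
      using 1 False that by (simp add: snd_tree_of_word_comp_Cons)
    with False have "level_word (fst (tree_of_word w)) (snd (tree_of_word w)) =
            join_sep (Max (set w)) (map (\<lambda>i. ?ws ! i) [0..<length ?ws])"
      by (simp add: fst_tree_of_word level_word_Node snd_tree_of_word_Nil)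
        (rule arg_cong[where f = "join_sep _"] map_cong; simp)
    also have "\<dots> = w"
      by (simp add: map_nth join_sep_split_sep)
    finally show ?thesis .
  qed simp
qed

lemma tree_of_word_level_word:
  "wf_ptree T \<Longrightarrow> increasing_to_root T lam \<Longrightarrow> zero_off_vertices T lam \<Longrightarrow>
     tree_of_word (level_word T lam) = (T, lam)"
proof (induction T arbitrary: lam)
  case Leaf
  then show ?case
    by (auto simp: zero_off_vertices_def)
next
  case (Node ts)
  let ?w = "level_word (Node ts) lam"
  let ?ws = "map (\<lambda>i. level_word (ts ! i) (lam \<circ> Cons i)) [0..<length ts]"
  have "lam [] \<in> set ?w"
    using Node.prems(1) by (simp add: set_level_word)
  then have w: "?w \<noteq> []"
    by auto
  have Max: "Max (set ?w) = lam []"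
    using Node.prems by (simp add: Max_level_word)
  have split: "split_sep (lam []) ?w = ?ws"
    using Node.prems(1,2) by (rule split_level_word_Node)
  have children: "tree_of_word (?ws ! i) = (ts ! i, lam \<circ> Cons i)" if "i < length ts" for i
    using Node that by (simp add: increasing_to_root_Node zero_off_vertices_Node)
  have "fst (tree_of_word ?w) = Node ts"
    using children by (simp add: fst_tree_of_word[OF w] Max split) (rule nth_equalityI; simp)
  moreover have "snd (tree_of_word ?w) = lam"
  proof
    fix p
    show "snd (tree_of_word ?w) p = lam p"
      using children Node.prems(3)
      by (cases p)
        (auto simp: snd_tree_of_word_Nil[OF w] snd_tree_of_word_Cons[OF w] Max split zero_off_vertices_Node)
  qed
  ultimately show ?case
    by (simp add: prod_eq_iff)
qed

lemma bij_betw_level_word: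
  "bij_betw (\<lambda>(T, lam). level_word T lam) (increasing_trees n) (packed_words n)"
proof (rule bij_betw_byWitness[where f' = tree_of_word])
  show "\<forall>x\<in>increasing_trees n. tree_of_word (case x of (T, lam) \<Rightarrow> level_word T lam) = x"
    by (auto simp: increasing_trees_def std_level_iff tree_of_word_level_word)
  show "\<forall>w\<in>packed_words n. (case tree_of_word w of (T, lam) \<Rightarrow> level_word T lam) = w"
    using level_word_tree_of_word by (simp add: case_prod_beta)
  show "(\<lambda>(T, lam). level_word T lam) ` increasing_trees n \<subseteq> packed_words n"
    by (auto simp: increasing_trees_def std_level_def packed_words_def set_level_word length_level_word)
  show "tree_of_word ` packed_words n \<subseteq> increasing_trees n"
  proof
    fix x
    assume "x \<in> tree_of_word ` packed_words n"
    then obtain w k where x: "x = tree_of_word w" and w: "length w = n" "set w = {1..k}"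
      by (auto simp: packed_words_def)
    obtain T lam where T: "tree_of_word w = (T, lam)"
      by fastforce
    have "wf_ptree T" "zero_off_vertices T lam" "increasing_to_root T lam" "level_word T lam = w"
      using wf_tree_of_word[of w] zero_off_vertices_tree_of_word[of w]
        increasing_to_root_tree_of_word[of w] level_word_tree_of_word[of w]
      by (simp_all add: T)
    then show "x \<in> increasing_trees n"
      using w by (auto simp: x T increasing_trees_def std_level_iff set_level_word
          length_level_word[symmetric])
  qed
qed

lemma sigma_eq_blocks_of_level_word:
  assumes "wf_ptree T"
  shows "sigma (T, lam) = blocks_of_word (level_word T lam)"
proof -
  have card: "card (set (level_word T lam)) = num_levels T lam"
    using assms by (simp add: set_level_word num_levels_def)
  have length: "length (level_word T lam) = length (branchings T)"
    by (simp add: level_word_def)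
  have nth: "q < length (branchings T) \<Longrightarrow> level_word T lam ! q = lam (fst (branchings T ! q))" for q
    by (simp add: level_word_def)
  show ?thesis
    unfolding sigma_def blocks_of_word_def card length by (auto intro!: map_cong simp: nth)
qed

theorem theorem1p1:
  fixes n :: nat
  shows "bij_betw sigma (increasing_trees n) {Ps. set_composition {1..n} Ps}"
proof -
  have "bij_betw (blocks_of_word \<circ> (\<lambda>(T, lam). level_word T lam))
          (increasing_trees n) {Ps. set_composition {1..n} Ps}"
    using bij_betw_level_word bij_betw_blocks_of_word by (rule bij_betw_trans)
  moreover have "sigma x = (blocks_of_word \<circ> (\<lambda>(T, lam). level_word T lam)) x"
    if "x \<in> increasing_trees n" for x
    using that by (auto simp: increasing_trees_def sigma_eq_blocks_of_level_word)
  ultimately show ?thesis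
    using bij_betw_cong by blast
qed

end
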